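(* Let $\mathcal O$ be a polycube with orthogonally convex layers, and let $1\le i\le m$. Every nonempty beam lying on the surface of the layer $\mathcal O_i$ (i.e., every nonempty top $i$-beam lying on top of $\mathcal O_i$ and every nonempty bottom $(i-1)$-beam lying on the bottom of $\mathcal O_i$) has at least one of its two anchors on the $i$-band.
   Context: A polycube $\mathcal O$ is an orthogonal polyhedron homeomorphic to a sphere formed as a union of unit cubes glued along entire faces; its surface is subdivided into unit squares called cells. Let $z_0<\dots<z_m$ be the distinct $z$-coordinates of vertices of $\mathcal O$; the $i$-plane is $z=z_i$. The layer $\mathcal O_i$ is the part of $\mathcal O$ between the $(i-1)$-plane and the $i$-plane. $\mathcal O$ has orthogonally convex layers if each $\mathcal O_i$ meets every line parallel to a coordinate axis in a single segment or not at all. The $i$-band is the set of vertical surface cells between the $(i-1)$-plane and the $i$-plane (the lateral boundary of $\mathcal O_i$). A face is a maximal edge-connected set of coplanar cells; an $i$-face is a face in the $i$-plane; it lies either on top of $\mathcal O_i$ (a top face) or on the bottom of $\mathcal O_{i+1}$ (a bottom face). Two surface pieces are adjacent if their boundaries share a cell edge. Cells are parallel if they lie in parallel planes. Beams: if a band cell $a$ (on the $i$-band or the $(i+1)$-band) has its horizontal edge $e$ lying in the $i$-plane adjacent to an $i$-face, then $i$-beam$(a)$ is the portion of that $i$-face illuminated by rays emitted from $e$ in the horizontal direction orthogonal to $a$; otherwise $i$-beam$(a)$ is empty. A nonempty $i$-beam$(a)$ has two anchors: $a$ and the band cell $b$ parallel to $a$ and adjacent to the beam at its other end ($b$ lies on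 the $i$-band or on the $(i+1)$-band); $i$-beam$(a)$ and $i$-beam$(b)$ coincide. *)

theory Defs
  imports "HOL-Analysis.Analysis"
begin

text \<open>A unit cube is named by its minimal corner (x,y,z) in Z^3; it occupies
  [x,x+1] x [y,y+1] x [z,z+1] in R^3.\<close>

type_synonym cube = "int \<times> int \<times> int"

definition cube_pts :: "cube \<Rightarrow> (real \<times> real \<times> real) set" where
  "cube_pts c = (case c of (x,y,z) \<Rightarrow>
     {(a,b,w). of_int x \<le> a \<and> a \<le> of_int x + 1 \<and> of_int y \<le> b \<and> b \<le> of_int y + 1
             \<and> of_int z \<le> w \<and> w \<le> of_int z + 1})"

definition solid :: "cube set \<Rightarrow> (real \<times> real \<times> real) set" where
  "solid K = (\<Union>c\<in>K. cube_pts c)"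

definition face_glued :: "cube set \<Rightarrow> cube \<Rightarrow> cube \<Rightarrow> bool" where
  "face_glued C p q = (p \<in> C \<and> q \<in> C \<and>
     (case p of (x,y,z) \<Rightarrow> case q of (x',y',z') \<Rightarrow> \<bar>x-x'\<bar> + \<bar>y-y'\<bar> + \<bar>z-z'\<bar> = 1))"

definition polycube :: "cube set \<Rightarrow> bool" where
  "polycube C = (finite C \<and> C \<noteq> {} \<and> (\<forall>p\<in>C. \<forall>q\<in>C. (face_glued C)\<^sup>*\<^sup>* p q)
     \<and> frontier (solid C) homeomorphic sphere (0::real \<times> real \<times> real) 1)"

definition sect :: "cube set \<Rightarrow> int \<Rightarrow> (int \<times> int) set" where
  "sect C z = {(x,y). (x,y,z) \<in> C}"

text \<open>Heights of the planes z = k containing vertices of the polycube: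
  exactly those where the cross-section changes.\<close>
definition planes :: "cube set \<Rightarrow> int set" where
  "planes C = {k. sect C (k - 1) \<noteq> sect C k}"

definition zpl :: "cube set \<Rightarrow> nat \<Rightarrow> int" where
  "zpl C i = sorted_list_of_set (planes C) ! i"

definition mtop :: "cube set \<Rightarrow> nat" where
  "mtop C = card (planes C) - 1"

definition layer :: "cube set \<Rightarrow> nat \<Rightarrow> cube set" where
  "layer C i = {(x,y,z). (x,y,z) \<in> C \<and> zpl C (i - 1) \<le> z \<and> z < zpl C i}"

definition axis_lines :: "(real \<times> real \<times> real) set set" where
  "axis_lines = {{(t,b,w) | t. True} | b w. True} \<union> {{(a,t,w) | t. True} | a w. True}
              \<union> {{(a,b,t) | t. True} | a b. True}"

definition orth_convex_layers :: "cube set \<Rightarrow> bool" where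
  "orth_convex_layers C = (\<forall>i. 1 \<le> i \<and> i \<le> mtop C \<longrightarrow>
      (\<forall>L\<in>axis_lines. convex (L \<inter> solid (layer C i))))"

definition hsurf :: "cube set \<Rightarrow> int \<Rightarrow> int \<times> int \<Rightarrow> bool" where
  "hsurf C k p = (case p of (x,y) \<Rightarrow> ((x,y,k-1) \<in> C) \<noteq> ((x,y,k) \<in> C))"

definition hadj :: "cube set \<Rightarrow> int \<Rightarrow> int \<times> int \<Rightarrow> int \<times> int \<Rightarrow> bool" where
  "hadj C k p q = (hsurf C k p \<and> hsurf C k q \<and> \<bar>fst p - fst q\<bar> + \<bar>snd p - snd q\<bar> = 1)"

definition hface_at :: "cube set \<Rightarrow> int \<Rightarrow> int \<times> int \<Rightarrow> (int \<times> int) set" where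
  "hface_at C k p = {q. hsurf C k p \<and> (hadj C k)\<^sup>*\<^sup>* p q}"

text \<open>Axis-relative coordinates: ax = True means the beam runs along x
  (u = x, v = y), ax = False means it runs along y (u = y, v = x).\<close>
definition hpos :: "bool \<Rightarrow> int \<Rightarrow> int \<Rightarrow> int \<times> int" where
  "hpos ax u v = (if ax then (u,v) else (v,u))"

definition cube_at :: "cube set \<Rightarrow> bool \<Rightarrow> int \<Rightarrow> int \<Rightarrow> int \<Rightarrow> bool" where
  "cube_at C ax u v z = (case hpos ax u v of (x,y) \<Rightarrow> (x,y,z) \<in> C)"

text \<open>Vertical (band) surface cell (ax,u,v,z): the unit square in the plane
  u = const separating cubes u-1 and u, spanning [v,v+1] and heights [z,z+1].\<close>
definition vsurf :: "cube set \<Rightarrow> bool \<Rightarrow> int \<Rightarrow> int \<Rightarrow> int \<Rightarrow> bool" where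
  "vsurf C ax u v z = (cube_at C ax (u - 1) v z \<noteq> cube_at C ax u v z)"

text \<open>The j-th horizontal cell met by rays emitted from the edge u of the cell,
  in direction +u (d = True) or -u (d = False).\<close>
definition beam_cell :: "bool \<Rightarrow> int \<Rightarrow> int \<Rightarrow> bool \<Rightarrow> nat \<Rightarrow> int \<times> int" where
  "beam_cell ax u v d j = hpos ax (if d then u + int j else u - 1 - int j) v"

text \<open>Beam of the band cell a = (ax,u,v,z) in the plane z = k, in direction d:
  nonempty only if a is a surface cell with a horizontal edge in the plane z = k
  (z = k-1: top edge; z = k: bottom edge) adjacent to a face in that plane;
  it consists of the cells of that face illuminated by the rays.\<close>
definition ibeam :: "cube set \<Rightarrow> bool \<Rightarrow> int \<Rightarrow> int \<Rightarrow> int \<Rightarrow> bool \<Rightarrow> int \<Rightarrow> (int \<times> int) set" where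
  "ibeam C ax u v z d k =
     (if vsurf C ax u v z \<and> (z = k - 1 \<or> z = k)
      then {beam_cell ax u v d j | j. \<forall>j'\<le>j. beam_cell ax u v d j' \<in> hface_at C k (beam_cell ax u v d 0)}
      else {})"

text \<open>Anchors of the beam, given as (u', z') (same axis ax and same v):
  the cell a itself and the parallel band cell adjacent to the beam at its other end.\<close>
definition other_anchor :: "cube set \<Rightarrow> bool \<Rightarrow> int \<Rightarrow> int \<Rightarrow> int \<Rightarrow> bool \<Rightarrow> int \<Rightarrow> int \<times> int \<Rightarrow> bool" where
  "other_anchor C ax u v z d k b = (\<exists>n>0.
      (\<forall>j<n. beam_cell ax u v d j \<in> ibeam C ax u v z d k)
      \<and> beam_cell ax u v d n \<notin> ibeam C ax u v z d k
      \<and> fst b = (if d then u + int n else u - int n)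
      \<and> (snd b = k - 1 \<or> snd b = k)
      \<and> vsurf C ax (fst b) v (snd b))"

definition anchors :: "cube set \<Rightarrow> bool \<Rightarrow> int \<Rightarrow> int \<Rightarrow> int \<Rightarrow> bool \<Rightarrow> int \<Rightarrow> (int \<times> int) set" where
  "anchors C ax u v z d k = insert (u, z) {b. other_anchor C ax u v z d k b}"

definition on_band :: "cube set \<Rightarrow> nat \<Rightarrow> int \<Rightarrow> bool" where
  "on_band C i z = (zpl C (i - 1) \<le> z \<and> z < zpl C i)"

definition top_cell :: "cube set \<Rightarrow> int \<Rightarrow> int \<times> int \<Rightarrow> bool" where
  "top_cell C k p = (case p of (x,y) \<Rightarrow> (x,y,k-1) \<in> C \<and> (x,y,k) \<notin> C)"

definition bottom_cell :: "cube set \<Rightarrow> int \<Rightarrow> int \<times> int \<Rightarrow> bool" where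
  "bottom_cell C k p = (case p of (x,y) \<Rightarrow> (x,y,k) \<in> C \<and> (x,y,k-1) \<notin> C)"

end

theory Submission
  imports Defs
begin

text \<open>An anchor a of a beam lying in a plane that bounds \<open>O\<^sub>i\<close> is either on the
  i-band or at height h in the layer adjacent across that plane. In the latter case the cube
  behind a at height h is present, while the cube at height h in the first beam column is absent.
  Orthogonal convexity of the adjacent layer then forbids any cube at height h in the whole row
  of the beam, so a beam cell is a surface cell exactly when it carries a cube of \<open>O\<^sub>i\<close>.
  Hence the beam stops where this row of cubes of \<open>O\<^sub>i\<close> ends, and the band cell
  there is an anchor on the i-band.\<close>

lemma finite_planes:
  assumes "finite C"
  shows "finite (planes C)"
proof -
  have "planes C \<subseteq> (\<lambda>(x,y,z). z) ` C \<union> (\<lambda>(x,y,z). z + 1) ` C"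
  proof
    fix k assume "k \<in> planes C"
    then obtain x y where "(x,y,k-1) \<in> C \<or> (x,y,k) \<in> C"
      unfolding planes_def sect_def by blast
    then show "k \<in> (\<lambda>(x,y,z). z) ` C \<union> (\<lambda>(x,y,z). z + 1) ` C"
      by (auto intro: rev_image_eqI)
  qed
  then show ?thesis
    using assms finite_subset by blast
qed

lemma zpl_strict_mono:
  assumes "finite C" "i < j" "j \<le> mtop C"
  shows "zpl C i < zpl C j"
proof -
  have "j < length (sorted_list_of_set (planes C))"
    using assms finite_planes unfolding mtop_def by auto
  then show ?thesis
    unfolding zpl_def using sorted_wrt_nth_less[OF strict_sorted_list_of_set assms(2)] by blast
qed

lemma zpl_bounds:
  assumes "finite C" "p \<in> planes C"
  shows "zpl C 0 \<le> p" "p \<le> zpl C (mtop C)"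
proof -
  let ?s = "sorted_list_of_set (planes C)"
  have len: "length ?s = card (planes C)"
    by simp
  have "p \<in> set ?s"
    using assms finite_planes by simp
  then obtain j where j: "j < length ?s" "?s ! j = p"
    by (metis in_set_conv_nth)
  show "zpl C 0 \<le> p" "p \<le> zpl C (mtop C)"
    unfolding zpl_def mtop_def
    using sorted_nth_mono[OF sorted_sorted_list_of_set, of 0 j "planes C"]
      sorted_nth_mono[OF sorted_sorted_list_of_set, of j "card (planes C) - 1" "planes C"] j len
    by auto
qed

text \<open>The lowest cube height is a plane, and so is one above the highest.\<close>
lemma cube_height_bounds:
  assumes "finite C" "(x,y,h) \<in> C"
  shows "zpl C 0 \<le> h" "h < zpl C (mtop C)"
proof -
  let ?Z = "(\<lambda>(x,y,z). z) ` C"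
  have Z: "finite ?Z" "h \<in> ?Z"
    using assms by (auto intro: rev_image_eqI)
  have "Min ?Z \<in> ?Z"
    using Z by (intro Min_in) auto
  then obtain a b where "(a,b,Min ?Z) \<in> C"
    by auto
  moreover have "(a',b',Min ?Z - 1) \<notin> C" for a' b'
    using Min_le[OF Z(1), of "Min ?Z - 1"] by (force intro: rev_image_eqI)
  ultimately have "Min ?Z \<in> planes C"
    unfolding planes_def sect_def by auto
  then show "zpl C 0 \<le> h"
    using zpl_bounds(1)[OF assms(1)] Min_le[OF Z] by fastforce
  have "Max ?Z \<in> ?Z"
    using Z by (intro Max_in) auto
  then obtain a b where "(a,b,Max ?Z) \<in> C"
    by auto
  moreover have "(a',b',Max ?Z + 1) \<notin> C" for a' b'
    using Max_ge[OF Z(1), of "Max ?Z + 1"] by (force intro: rev_image_eqI)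
  ultimately have "Max ?Z + 1 \<in> planes C"
    unfolding planes_def sect_def by auto
  then show "h < zpl C (mtop C)"
    using zpl_bounds(2)[OF assms(1)] Max_ge[OF Z] by fastforce
qed

lemma height_in_layer:
  assumes "finite C" "zpl C 0 \<le> h" "h < zpl C (mtop C)"
  obtains l where "1 \<le> l" "l \<le> mtop C" "zpl C (l - 1) \<le> h" "h < zpl C l"
proof -
  define l where "l = (LEAST l. h < zpl C l)"
  have "h < zpl C l"
    unfolding l_def using assms(3) by (rule LeastI)
  moreover have "l \<le> mtop C"
    unfolding l_def using assms(3) by (rule Least_le)
  moreover have "l \<noteq> 0"
    using assms(2) \<open>h < zpl C l\<close> by (cases l) auto
  moreover have "zpl C (l - 1) \<le> h"
    using not_less_Least[of "l - 1" "\<lambda>l. h < zpl C l"] \<open>l \<noteq> 0\<close> unfolding l_def by fastforce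
  ultimately show ?thesis
    using that by (simp add: Suc_le_eq)
qed

definition row_convex :: "cube set \<Rightarrow> bool \<Rightarrow> int \<Rightarrow> int \<Rightarrow> bool" where
  "row_convex C ax v h \<longleftrightarrow>
     (\<forall>p q r. cube_at C ax p v h \<longrightarrow> cube_at C ax q v h \<longrightarrow> p < r \<longrightarrow> r < q \<longrightarrow> cube_at C ax r v h)"

text \<open>The axis-parallel line through the centres of the cubes cube_at C ax _ v h,
  parametrised so that the centre of the cube in column r is reached at t = r + 1/2.\<close>
definition center_line :: "bool \<Rightarrow> int \<Rightarrow> int \<Rightarrow> real \<Rightarrow> real \<times> real \<times> real" where
  "center_line ax v h t =
     (if ax then (t, of_int v + 1/2, of_int h + 1/2) else (of_int v + 1/2, t, of_int h + 1/2))"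

lemma range_center_line: "range (center_line ax v h) \<in> axis_lines"
proof (cases ax)
  case True
  then have "range (center_line ax v h) = {(t, of_int v + 1/2, of_int h + 1/2) | t. True}"
    by (auto simp: center_line_def)
  then show ?thesis
    unfolding axis_lines_def by blast
next
  case False
  then have "range (center_line ax v h) = {(of_int v + 1/2, t, of_int h + 1/2) | t. True}"
    by (auto simp: center_line_def)
  then show ?thesis
    unfolding axis_lines_def by blast
qed

lemma center_line_convex_combination:
  "(1 - \<theta>) *\<^sub>R center_line ax v h s + \<theta> *\<^sub>R center_line ax v h t
     = center_line ax v h ((1 - \<theta>) * s + \<theta> * t)"
  by (cases ax) (simp_all add: center_line_def field_simps)

lemma int_eq_iff_half_in_unit_interval:
  fixes a b :: int
  shows "of_int a \<le> (of_int b + 1/2 :: real) \<and> of_int b + 1/2 \<le> (of_int a + 1 :: real) \<longleftrightarrow> a = b"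
proof -
  have "of_int a \<le> (of_int b + 1/2 :: real) \<longleftrightarrow> a \<le> b"
    by linarith
  moreover have "of_int b + 1/2 \<le> (of_int a + 1 :: real) \<longleftrightarrow> b \<le> a"
    by linarith
  ultimately show ?thesis
    by auto
qed

lemma center_line_in_cube_pts:
  "center_line ax v h (of_int r + 1/2) \<in> cube_pts c \<longleftrightarrow> c = (case hpos ax r v of (x,y) \<Rightarrow> (x,y,h))"
  by (cases c; cases ax)
     (auto simp: cube_pts_def center_line_def hpos_def int_eq_iff_half_in_unit_interval)

lemma center_line_in_solid_layer:
  assumes "zpl C (l - 1) \<le> h" "h < zpl C l"
  shows "center_line ax v h (of_int r + 1/2) \<in> solid (layer C l) \<longleftrightarrow> cube_at C ax r v h"
  using assms
  by (cases "hpos ax r v")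
     (auto simp: solid_def layer_def cube_at_def center_line_in_cube_pts)

lemma row_convex_in_layer:
  assumes "orth_convex_layers C" "1 \<le> l" "l \<le> mtop C" "zpl C (l - 1) \<le> h" "h < zpl C l"
  shows "row_convex C ax v h"
  unfolding row_convex_def
proof (intro allI impI)
  fix p q r
  assume cubes: "cube_at C ax p v h" "cube_at C ax q v h" and "p < r" "r < q"
  let ?S = "range (center_line ax v h) \<inter> solid (layer C l)"
  let ?c = "\<lambda>r. center_line ax v h (of_int r + 1/2)"
  have "convex ?S"
    using assms(1-3) range_center_line unfolding orth_convex_layers_def by blast
  moreover have "?c p \<in> ?S" "?c q \<in> ?S"
    using cubes center_line_in_solid_layer[OF assms(4,5)] by auto
  moreover define \<theta> where "\<theta> = (of_int r - of_int p) / (of_int q - of_int p :: real)"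
  moreover have "0 \<le> \<theta>" "\<theta> \<le> 1"
    using \<open>p < r\<close> \<open>r < q\<close> unfolding \<theta>_def by (auto simp: field_simps)
  ultimately have "(1 - \<theta>) *\<^sub>R ?c p + \<theta> *\<^sub>R ?c q \<in> ?S"
    by (intro convexD) auto
  moreover have "\<theta> * (of_int q - of_int p) = of_int r - of_int p"
    using \<open>p < r\<close> \<open>r < q\<close> unfolding \<theta>_def by simp
  then have "(1 - \<theta>) * (of_int p + 1/2) + \<theta> * (of_int q + 1/2) = (of_int r + 1/2 :: real)"
    by (simp add: algebra_simps add_divide_distrib[symmetric])
  ultimately have "?c r \<in> ?S"
    by (simp add: center_line_convex_combination)
  then show "cube_at C ax r v h"
    using center_line_in_solid_layer[OF assms(4,5)] by blast
qed

text \<open>A row containing no cube is trivially convex; otherwise it lies inside one layer.\<close>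
lemma row_convex_if_orth_convex_layers:
  assumes "finite C" "orth_convex_layers C"
  shows "row_convex C ax v h"
proof (cases "\<exists>p. cube_at C ax p v h")
  case True
  then obtain p where "cube_at C ax p v h"
    by blast
  then obtain x y where "(x,y,h) \<in> C"
    unfolding cube_at_def by (cases "hpos ax p v") auto
  then obtain l where "1 \<le> l" "l \<le> mtop C" "zpl C (l - 1) \<le> h" "h < zpl C l"
    using height_in_layer cube_height_bounds assms(1) by metis
  then show ?thesis
    using row_convex_in_layer assms(2) by blast
next
  case False
  then show ?thesis
    unfolding row_convex_def by blast
qed

lemma hsurf_if_in_hface_at: "q \<in> hface_at C k p \<Longrightarrow> hsurf C k q"
proof -
  have "(hadj C k)\<^sup>*\<^sup>* p q \<Longrightarrow> hsurf C k p \<Longrightarrow> hsurf C k q"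
    by (induction rule: rtranclp_induct) (auto simp: hadj_def)
  then show "q \<in> hface_at C k p \<Longrightarrow> hsurf C k q"
    unfolding hface_at_def by blast
qed

lemma hface_at_hadj_closed: "q \<in> hface_at C k p \<Longrightarrow> hadj C k q r \<Longrightarrow> r \<in> hface_at C k p"
  unfolding hface_at_def by (auto intro: rtranclp.rtrancl_into_rtrancl)

lemma finite_hface_at:
  assumes "finite C"
  shows "finite (hface_at C k p)"
proof -
  have "hface_at C k p \<subseteq> (\<lambda>(x,y,z). (x,y)) ` C"
  proof
    fix q assume "q \<in> hface_at C k p"
    then obtain x y where "q = (x,y)" "(x,y,k-1) \<in> C \<or> (x,y,k) \<in> C"
      using hsurf_if_in_hface_at unfolding hsurf_def by (cases q) blast
    then show "q \<in> (\<lambda>(x,y,z). (x,y)) ` C"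
      by (auto intro: rev_image_eqI)
  qed
  then show ?thesis
    using assms finite_subset by blast
qed

lemma hsurf_hpos: "hsurf C k (hpos ax c v) \<longleftrightarrow> cube_at C ax c v (k - 1) \<noteq> cube_at C ax c v k"
  by (cases "hpos ax c v") (simp add: hsurf_def cube_at_def)

lemma top_cell_hpos: "top_cell C k (hpos ax c v) \<longleftrightarrow> cube_at C ax c v (k - 1) \<and> \<not> cube_at C ax c v k"
  by (cases "hpos ax c v") (simp add: top_cell_def cube_at_def)

lemma bottom_cell_hpos: "bottom_cell C k (hpos ax c v) \<longleftrightarrow> cube_at C ax c v k \<and> \<not> cube_at C ax c v (k - 1)"
  by (cases "hpos ax c v") (simp add: bottom_cell_def cube_at_def)

definition beam_col :: "int \<Rightarrow> bool \<Rightarrow> nat \<Rightarrow> int" where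
  "beam_col u d j = (if d then u + int j else u - 1 - int j)"

lemma beam_cell_eq: "beam_cell ax u v d j = hpos ax (beam_col u d j) v"
  by (simp add: beam_cell_def beam_col_def)

lemma inj_beam_cell: "inj (beam_cell ax u v d)"
  by (rule injI) (auto simp: beam_cell_def hpos_def split: if_splits)

lemma hadj_beam_cell_Suc:
  "hsurf C k (beam_cell ax u v d j) \<Longrightarrow> hsurf C k (beam_cell ax u v d (Suc j))
     \<Longrightarrow> hadj C k (beam_cell ax u v d j) (beam_cell ax u v d (Suc j))"
  by (auto simp: hadj_def beam_cell_def hpos_def)

lemma mem_ibeam_iff:
  assumes "vsurf C ax u v z" "z = k - 1 \<or> z = k"
  shows "beam_cell ax u v d j \<in> ibeam C ax u v z d k
     \<longleftrightarrow> (\<forall>j'\<le>j. beam_cell ax u v d j' \<in> hface_at C k (beam_cell ax u v d 0))"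
  using assms unfolding ibeam_def by (auto simp: inj_eq[OF inj_beam_cell])

text \<open>The face is finite while the beam cells are pairwise distinct, so the rays leave the face.\<close>
lemma beam_exit:
  assumes "finite C" "hsurf C k (beam_cell ax u v d 0)"
  obtains n where "0 < n" "\<forall>j<n. beam_cell ax u v d j \<in> hface_at C k (beam_cell ax u v d 0)"
    "beam_cell ax u v d n \<notin> hface_at C k (beam_cell ax u v d 0)"
    "\<not> hsurf C k (beam_cell ax u v d n)"
proof -
  let ?W = "beam_cell ax u v d" and ?F = "hface_at C k (beam_cell ax u v d 0)"
  have "finite (?W -` ?F)"
    using finite_vimageI[OF finite_hface_at[OF assms(1)] inj_beam_cell] .
  then have "\<exists>j. ?W j \<notin> ?F"
    using infinite_UNIV_nat by (metis UNIV_I finite_subset subsetI vimageI)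
  define n where "n = (LEAST j. ?W j \<notin> ?F)"
  have out: "?W n \<notin> ?F"
    unfolding n_def using \<open>\<exists>j. ?W j \<notin> ?F\<close> by (rule LeastI_ex)
  have inside: "\<forall>j<n. ?W j \<in> ?F"
    unfolding n_def using not_less_Least by blast
  have "?W 0 \<in> ?F"
    using assms(2) unfolding hface_at_def by simp
  then have "0 < n"
    using out by (cases n) auto
  then have "?W (n - 1) \<in> ?F" "Suc (n - 1) = n"
    using inside by auto
  then have "\<not> hsurf C k (?W n)"
    using out hsurf_if_in_hface_at hface_at_hadj_closed hadj_beam_cell_Suc by metis
  then show ?thesis
    using that \<open>0 < n\<close> inside out by blast
qed

lemma beam_far_anchor:
  assumes "finite C" "row_convex C ax v h"
    and heights: "(h = k \<and> h' = k - 1) \<or> (h = k - 1 \<and> h' = k)"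
    and a: "vsurf C ax u v h"
    and start: "\<not> cube_at C ax (beam_col u d 0) v h" "cube_at C ax (beam_col u d 0) v h'"
  shows "\<exists>b. other_anchor C ax u v h d k b \<and> snd b = h'"
proof -
  let ?W = "beam_cell ax u v d" and ?F = "hface_at C k (beam_cell ax u v d 0)"
  have behind: "cube_at C ax (beam_col u (\<not> d) 0) v h"
    using a start(1) unfolding vsurf_def beam_col_def by (cases d) auto
  have no_cube_around_start:
    "\<not> (cube_at C ax p v h \<and> cube_at C ax q v h \<and> p < beam_col u d 0 \<and> beam_col u d 0 < q)" for p q
    using assms(2) start(1) unfolding row_convex_def by blast
  have empty_row: "\<not> cube_at C ax (beam_col u d j) v h" for j
  proof (cases "j = 0")
    case True
    then show ?thesis using start(1) by simp
  next
    case False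
    then show ?thesis
      using no_cube_around_start[of "beam_col u (\<not> d) 0" "beam_col u d j"]
        no_cube_around_start[of "beam_col u d j" "beam_col u (\<not> d) 0"] behind
      by (cases d) (auto simp: beam_col_def)
  qed
  have hsurf_W: "hsurf C k (?W j) \<longleftrightarrow> cube_at C ax (beam_col u d j) v h'" for j
    unfolding beam_cell_eq hsurf_hpos using heights empty_row[of j] by auto
  obtain n where n: "0 < n" "\<forall>j<n. ?W j \<in> ?F" "?W n \<notin> ?F" "\<not> hsurf C k (?W n)"
    using beam_exit[OF assms(1)] start hsurf_W by metis
  have "cube_at C ax (beam_col u d (n - 1)) v h'"
    using n(1,2) hsurf_W hsurf_if_in_hface_at by (metis diff_less zero_less_one)
  moreover have "\<not> cube_at C ax (beam_col u d n) v h'"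
    using n(4) hsurf_W by simp
  moreover define b where "b = (if d then u + int n else u - int n, h')"
  ultimately have "vsurf C ax (fst b) v (snd b)"
    using \<open>0 < n\<close> unfolding vsurf_def beam_col_def b_def by (cases d) (auto simp: of_nat_diff algebra_simps)
  moreover have "\<forall>j<n. ?W j \<in> ibeam C ax u v h d k" "?W n \<notin> ibeam C ax u v h d k"
    using n heights mem_ibeam_iff[OF a] by auto
  ultimately have "other_anchor C ax u v h d k b"
    unfolding other_anchor_def using \<open>0 < n\<close> heights by (auto simp: b_def)
  then show ?thesis
    by (auto simp: b_def)
qed

lemma anchor_at_height:
  assumes "finite C" "row_convex C ax v h"
    and heights: "(h = k \<and> h' = k - 1) \<or> (h = k - 1 \<and> h' = k)"
    and "ibeam C ax u v z d k \<noteq> {}"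
    and "\<not> cube_at C ax (beam_col u d 0) v h" "cube_at C ax (beam_col u d 0) v h'"
  shows "\<exists>b\<in>anchors C ax u v z d k. snd b = h'"
proof -
  have "vsurf C ax u v z" "z = h \<or> z = h'"
    using assms(4) heights unfolding ibeam_def by (auto split: if_splits)
  then show ?thesis
    using beam_far_anchor[OF assms(1-3) _ assms(5,6)] unfolding anchors_def by auto
qed

theorem lemma3:
  fixes C :: "cube set" and i :: nat
  assumes "polycube C" and "orth_convex_layers C" and "1 \<le> i" and "i \<le> mtop C"
  shows "(\<forall>ax u v z d. ibeam C ax u v z d (zpl C i) \<noteq> {}
            \<and> top_cell C (zpl C i) (beam_cell ax u v d 0)
          \<longrightarrow> (\<exists>b\<in>anchors C ax u v z d (zpl C i). on_band C i (snd b)))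
       \<and> (\<forall>ax u v z d. ibeam C ax u v z d (zpl C (i - 1)) \<noteq> {}
            \<and> bottom_cell C (zpl C (i - 1)) (beam_cell ax u v d 0)
          \<longrightarrow> (\<exists>b\<in>anchors C ax u v z d (zpl C (i - 1)). on_band C i (snd b)))"
proof -
  have fin: "finite C"
    using assms(1) unfolding polycube_def by blast
  have rows: "row_convex C ax v h" for ax v h
    using row_convex_if_orth_convex_layers[OF fin assms(2)] .
  have "zpl C (i - 1) < zpl C i"
    using zpl_strict_mono[OF fin] assms(3,4) by simp
  then have "on_band C i (zpl C i - 1)" "on_band C i (zpl C (i - 1))"
    unfolding on_band_def by auto
  moreover have "\<exists>b\<in>anchors C ax u v z d k. snd b = k - 1"
    if "ibeam C ax u v z d k \<noteq> {}" "top_cell C k (beam_cell ax u v d 0)" for ax u v z d k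
    using anchor_at_height[OF fin rows, of k k "k - 1"] that by (simp add: beam_cell_eq top_cell_hpos)
  moreover have "\<exists>b\<in>anchors C ax u v z d k. snd b = k"
    if "ibeam C ax u v z d k \<noteq> {}" "bottom_cell C k (beam_cell ax u v d 0)" for ax u v z d k
    using anchor_at_height[OF fin rows, of "k - 1" k k] that by (simp add: beam_cell_eq bottom_cell_hpos)
  ultimately show ?thesis
    by metis
qed

end
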